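(* Assume the setting and Assumptions A2–A3 below. Run the improved Ader method below with \[ \mathcal{H}=\Big\{\eta_i=\frac{2^{i-1}D}{G}\sqrt{\frac{7}{2T}}\ :\ i=1,\dots,N\Big\},\quad N=\Big\lceil\tfrac12\log_2(1+4T/7)\Big\rceil+1,\quad \alpha=\sqrt{2/(TG^2D^2)}. \] Then for any comparator sequence $\mathbf{u}_1,\dots,\mathbf{u}_T\in\mathcal{X}$, with $P_T=\sum_{t=2}^T\|\mathbf{u}_t-\mathbf{u}_{t-1}\|_2$ and $k=\lfloor\frac12\log_2(1+\frac{4P_T}{7D})\rfloor+1$, \[ \sum_{t=1}^T f_t(\mathbf{x}_t)-\sum_{t=1}^T f_t(\mathbf{u}_t)\le\frac{3G}{4}\sqrt{2T(7D^2+4DP_T)}+\frac{GD\sqrt{2T}}{2}\big[1+2\ln(k+1)\big]=O\big(\sqrt{T(1+P_T)}\big). \]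
   Context: Setting: $\mathcal{X}\subseteq\mathbb{R}^d$ nonempty closed convex; $f_1,\dots,f_T:\mathcal{X}\to\mathbb{R}$ convex differentiable, $f_t$ revealed after $\mathbf{x}_t$ is played. A2: $\max_{\mathbf{x}\in\mathcal{X}}\|\nabla f_t(\mathbf{x})\|_2\le G$ for all $t$. A3: $\mathbf{0}\in\mathcal{X}$ and $\max_{\mathbf{x},\mathbf{x}'\in\mathcal{X}}\|\mathbf{x}-\mathbf{x}'\|_2\le D$. Improved Ader: given $\alpha>0$ and $\mathcal{H}=\{\eta_1\le\dots\le\eta_N\}$, one expert per $\eta$ starting at arbitrary $\mathbf{x}_1^\eta\in\mathcal{X}$; initial weights $w_1^{\eta_i}=\frac{C}{i(i+1)}$, $C=1+1/N$. At round $t$: output $\mathbf{x}_t=\sum_\eta w_t^\eta\mathbf{x}_t^\eta$; query $\nabla f_t(\mathbf{x}_t)$; define the surrogate loss $\ell_t(\mathbf{x})=\langle\nabla f_t(\mathbf{x}_t),\mathbf{x}-\mathbf{x}_t\rangle$; update $w_{t+1}^\eta=\frac{w_t^\eta e^{-\alpha\ell_t(\mathbf{x}_t^\eta)}}{\sum_\mu w_t^\mu e^{-\alpha\ell_t(\mathbf{x}_t^\mu)}}$; each expert updates $\mathbf{x}_{t+1}^\eta=\Pi_{\mathcal{X}}[\mathbf{x}_t^\eta-\eta\nabla f_t(\mathbf{x}_t)]$ (Euclidean projection). *)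

theory Defs
  imports "HOL-Analysis.Analysis"
begin

text \<open>Experts are indexed by i = 1..N (expert i uses step size eta i).
  ader_state gr X alpha eta N x1 k is the pair (expert points, expert weights) at round k+1;
  gr t x is the gradient of f_t at x. Round t uses f_t, i.e. gr t.\<close>

fun ader_state ::
  "(nat \<Rightarrow> 'a::euclidean_space \<Rightarrow> 'a) \<Rightarrow> 'a set \<Rightarrow> real \<Rightarrow> (nat \<Rightarrow> real) \<Rightarrow> nat
   \<Rightarrow> (nat \<Rightarrow> 'a) \<Rightarrow> nat \<Rightarrow> (nat \<Rightarrow> 'a) \<times> (nat \<Rightarrow> real)" where
  "ader_state gr X alpha eta N x1 0 =
     (x1, (\<lambda>i. (1 + 1 / real N) / (real i * (real i + 1))))"
| "ader_state gr X alpha eta N x1 (Suc k) =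
     (let (e, w) = ader_state gr X alpha eta N x1 k;
          x = (\<Sum>i=1..N. w i *\<^sub>R e i);
          g = gr (Suc k) x;
          l = (\<lambda>i. g \<bullet> (e i - x));
          Z = (\<Sum>j=1..N. w j * exp (- alpha * l j))
      in ((\<lambda>i. closest_point X (e i - eta i *\<^sub>R g)),
          (\<lambda>i. w i * exp (- alpha * l i) / Z)))"

definition ader_play ::
  "(nat \<Rightarrow> 'a::euclidean_space \<Rightarrow> 'a) \<Rightarrow> 'a set \<Rightarrow> real \<Rightarrow> (nat \<Rightarrow> real) \<Rightarrow> nat
   \<Rightarrow> (nat \<Rightarrow> 'a) \<Rightarrow> nat \<Rightarrow> 'a" where
  "ader_play gr X alpha eta N x1 t =
     (let (e, w) = ader_state gr X alpha eta N x1 (t - 1) in (\<Sum>i=1..N. w i *\<^sub>R e i))"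

end

theory Submission
  imports Defs "HOL-Probability.Hoeffding"
begin

text \<open>
  By convexity the dynamic regret is bounded by the linearised regret
  sum_t <grad f_t(x_t), x_t - u_t>, which splits, for every expert i, into the regret of the
  Hedge meta-algorithm against expert i on the surrogate losses l_t and the dynamic regret of
  projected online gradient descent with step size eta_i. Since the surrogate losses have
  weighted mean zero and modulus at most GD, Hoeffding's lemma bounds every Hedge normaliser by
  exp (alpha^2 (GD)^2 / 2); hence the meta-regret against expert i is at most
  ln (1 / w_1^i) / alpha + alpha T (GD)^2 / 2, and ln (1 / w_1^i) <= 2 ln (i + 1).
  Gradient descent with step size eta has dynamic regret at most
  (D^2 + 2 D P_T) / (2 eta) + eta T G^2 / 2; the index k is the one for which eta_k lies within a
  factor 2 below the minimiser of this bound, which costs at most a factor 3/2, and k <= N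
  because P_T <= T D.
\<close>

lemma convex_on_gradient_inequality:
  fixes f :: "'a::real_inner \<Rightarrow> real"
  assumes cvx: "convex_on X f" and "x \<in> X" "u \<in> X"
    and deriv: "(f has_derivative (\<lambda>h. g \<bullet> h)) (at x within X)"
  shows "f x + g \<bullet> (u - x) \<le> f u"
proof (rule ccontr)
  assume "\<not> ?thesis"
  then have gap: "0 < g \<bullet> (u - x) - (f u - f x)" (is "0 < ?\<delta>") by simp
  then have "u \<noteq> x" by auto
  then have ux: "norm (u - x) > 0" by simp
  define e where "e = ?\<delta> / (2 * norm (u - x))"
  have "e > 0" using gap ux by (simp add: e_def)
  with deriv obtain r where "r > 0" and r:
    "\<forall>y\<in>X. norm (y - x) < r \<longrightarrow> norm (f y - f x - g \<bullet> (y - x)) \<le> e * norm (y - x)"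
    unfolding has_derivative_within_alt by blast
  define s where "s = min 1 (r / (2 * norm (u - x)))"
  have s: "0 < s" "s \<le> 1" using \<open>r > 0\<close> ux by (auto simp: s_def)
  define y where "y = (1 - s) *\<^sub>R x + s *\<^sub>R u"
  have "y \<in> X"
    using convex_on_imp_convex[OF cvx] assms(2,3) s unfolding y_def by (simp add: convexD)
  have yx: "y - x = s *\<^sub>R (u - x)" by (simp add: y_def algebra_simps)
  have "norm (y - x) = s * norm (u - x)" using yx s by simp
  also have "\<dots> \<le> r / (2 * norm (u - x)) * norm (u - x)"
    by (intro mult_right_mono) (auto simp: s_def)
  also have "\<dots> < r" using ux \<open>r > 0\<close> by simp
  finally have "norm (f y - f x - g \<bullet> (y - x)) \<le> e * norm (y - x)"
    using r \<open>y \<in> X\<close> by blast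
  moreover have "e * norm (y - x) = s * ?\<delta> / 2" using yx s ux by (simp add: e_def)
  ultimately have "s * (g \<bullet> (u - x)) - s * ?\<delta> / 2 \<le> f y - f x"
    using yx by (simp add: abs_le_iff)
  moreover have "f y \<le> (1 - s) * f x + s * f u"
    using cvx assms(2,3) s unfolding y_def by (intro convex_onD) auto
  then have "f y - f x \<le> s * (g \<bullet> (u - x)) - s * ?\<delta>"
    by (simp add: algebra_simps)
  ultimately have "s * ?\<delta> \<le> s * ?\<delta> / 2"
    by linarith
  then show False using gap s by simp
qed

lemma cosh_le_exp_half_square: "cosh x \<le> exp (x\<^sup>2 / 2)" for x :: real
proof -
  have "- (2 * \<bar>x\<bar>) * (1/2) + ln (1 + 1/2 * (exp (2 * \<bar>x\<bar>) - 1)) \<le> (2 * \<bar>x\<bar>)\<^sup>2 / 8"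
    using Hoeffdings_lemma_aux[of "2 * \<bar>x\<bar>" "1/2"] by simp
  moreover have "1 + 1/2 * (exp (2 * \<bar>x\<bar>) - 1) = exp \<bar>x\<bar> * cosh \<bar>x\<bar>"
    by (simp add: cosh_def exp_minus field_simps flip: exp_add)
  ultimately have "ln (cosh \<bar>x\<bar>) \<le> x\<^sup>2 / 2"
    by (simp add: ln_mult power2_eq_square)
  then show ?thesis
    by (metis cosh_real_abs cosh_real_pos exp_ln exp_le_cancel_iff)
qed

lemma exp_le_cosh_sinh_chord:
  fixes b c y :: real
  assumes "\<bar>y\<bar> \<le> c" "c > 0"
  shows "exp (b * y) \<le> cosh (b * c) + y / c * sinh (b * c)"
proof -
  define t where "t = (c - y) / (2 * c)"
  have t: "0 \<le> t" "t \<le> 1" using assms by (auto simp: t_def field_simps abs_le_iff)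
  have "b * y = (1 - t) * (b * c) + t * (- (b * c))"
    using assms by (simp add: t_def field_simps)
  then have "exp (b * y) = exp ((1 - t) * (b * c) + t * (- (b * c)))"
    by simp
  also have "\<dots> \<le> (1 - t) * exp (b * c) + t * exp (- (b * c))"
    using convex_onD[OF exp_convex t, of "b * c" "- (b * c)"] by simp
  also have "\<dots> = cosh (b * c) + y / c * sinh (b * c)"
    using assms by (simp add: t_def cosh_def sinh_def field_simps)
  finally show ?thesis .
qed

lemma weighted_exp_le_exp_half_square:
  fixes w l :: "'i \<Rightarrow> real"
  assumes "finite I" "\<forall>i\<in>I. w i \<ge> 0" "sum w I = 1" "(\<Sum>i\<in>I. w i * l i) = 0"
    and "\<forall>i\<in>I. \<bar>l i\<bar> \<le> c" "c > 0"
  shows "(\<Sum>i\<in>I. w i * exp (a * l i)) \<le> exp (a\<^sup>2 * c\<^sup>2 / 2)"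
proof -
  have "(\<Sum>i\<in>I. w i * exp (a * l i)) \<le> (\<Sum>i\<in>I. w i * (cosh (a * c) + l i / c * sinh (a * c)))"
    using assms(2,5,6) exp_le_cosh_sinh_chord by (intro sum_mono mult_left_mono) auto
  also have "\<dots> = sum w I * cosh (a * c) + (\<Sum>i\<in>I. w i * l i) * (sinh (a * c) / c)"
  proof -
    have "w i * (cosh (a * c) + l i / c * sinh (a * c)) = w i * cosh (a * c) + w i * l i * (sinh (a * c) / c)"
      for i by (simp add: algebra_simps)
    then show ?thesis by (simp only: sum.distrib sum_distrib_right)
  qed
  also have "\<dots> = cosh (a * c)"
    using assms(3,4) by simp
  also have "\<dots> \<le> exp (a\<^sup>2 * c\<^sup>2 / 2)"
    using cosh_le_exp_half_square[of "a * c"] by (simp add: power_mult_distrib)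
  finally show ?thesis .
qed

lemma closest_point_gradient_step:
  fixes y v g :: "'a::euclidean_space"
  assumes X: "X \<noteq> {}" "closed X" "convex X" and "v \<in> X" "\<eta> > 0"
  shows "g \<bullet> (y - v) \<le> ((norm (y - v))\<^sup>2 - (norm (closest_point X (y - \<eta> *\<^sub>R g) - v))\<^sup>2) / (2 * \<eta>)
           + \<eta> * (norm g)\<^sup>2 / 2"
proof -
  have "norm (closest_point X (y - \<eta> *\<^sub>R g) - v) \<le> norm ((y - v) - \<eta> *\<^sub>R g)"
    using closest_point_lipschitz[OF X(3,2,1), of "y - \<eta> *\<^sub>R g" v] closest_point_self[OF \<open>v \<in> X\<close>]
    by (simp add: dist_norm algebra_simps)
  then have "(norm (closest_point X (y - \<eta> *\<^sub>R g) - v))\<^sup>2 \<le> (norm ((y - v) - \<eta> *\<^sub>R g))\<^sup>2"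
    by (intro power_mono) auto
  also have "\<dots> = (norm (y - v))\<^sup>2 - 2 * \<eta> * (g \<bullet> (y - v)) + \<eta>\<^sup>2 * (norm g)\<^sup>2"
    unfolding power2_norm_eq_inner
    by (simp add: inner_diff_left inner_diff_right inner_commute algebra_simps power2_eq_square)
  finally show ?thesis
    using \<open>\<eta> > 0\<close> by (simp add: field_simps power2_eq_square)
qed

lemma power2_norm_diff_change_le:
  fixes a b c :: "'a::real_normed_vector"
  assumes "a \<in> X" "b \<in> X" "c \<in> X" and diam: "\<forall>x\<in>X. \<forall>x'\<in>X. norm (x - x') \<le> D"
  shows "(norm (a - b))\<^sup>2 - (norm (a - c))\<^sup>2 \<le> 2 * D * norm (b - c)"
proof -
  define p q where "p = norm (a - b)" and "q = norm (a - c)"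
  have pq: "\<bar>p - q\<bar> \<le> norm (b - c)"
    using norm_triangle_ineq3[of "a - b" "a - c"] by (simp add: p_def q_def norm_minus_commute)
  have "0 \<le> p" "p \<le> D" "0 \<le> q" "q \<le> D"
    using assms by (auto simp: p_def q_def)
  have "p\<^sup>2 - q\<^sup>2 = (p - q) * (p + q)" by (simp add: power2_eq_square algebra_simps)
  also have "\<dots> \<le> \<bar>p - q\<bar> * (p + q)"
    using \<open>0 \<le> p\<close> \<open>0 \<le> q\<close> by (intro mult_right_mono) auto
  also have "\<dots> \<le> norm (b - c) * (2 * D)"
    using pq \<open>p \<le> D\<close> \<open>q \<le> D\<close> \<open>0 \<le> p\<close> \<open>0 \<le> q\<close> by (intro mult_mono) auto
  finally show ?thesis by (simp add: p_def q_def algebra_simps)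
qed

lemma projected_gradient_regret_telescoping:
  fixes y v g :: "nat \<Rightarrow> 'a::euclidean_space"
  assumes X: "X \<noteq> {}" "closed X" "convex X" and "\<eta> > 0"
    and step: "\<And>k. y (Suc k) = closest_point X (y k - \<eta> *\<^sub>R g k)"
    and "y 0 \<in> X" and v: "\<And>k. k \<le> n \<Longrightarrow> v k \<in> X"
    and gG: "\<And>k. k \<le> n \<Longrightarrow> norm (g k) \<le> G"
    and diam: "\<forall>x\<in>X. \<forall>x'\<in>X. norm (x - x') \<le> D"
  shows "(\<Sum>k<Suc n. g k \<bullet> (y k - v k)) \<le>
     (D\<^sup>2 + 2 * D * (\<Sum>k<n. norm (v (Suc k) - v k)) - (norm (y (Suc n) - v n))\<^sup>2) / (2 * \<eta>)
     + \<eta> * real (Suc n) * G\<^sup>2 / 2"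
proof -
  have y: "y k \<in> X" for k
    using \<open>y 0 \<in> X\<close> step closest_point_in_set[OF X(2,1)] by (cases k) auto
  have one_step: "g k \<bullet> (y k - v k) \<le> ((norm (y k - v k))\<^sup>2 - (norm (y (Suc k) - v k))\<^sup>2) / (2 * \<eta>)
      + \<eta> * G\<^sup>2 / 2" if "v k \<in> X" "norm (g k) \<le> G" for k
  proof -
    have "\<eta> * (norm (g k))\<^sup>2 / 2 \<le> \<eta> * G\<^sup>2 / 2"
      using that \<open>\<eta> > 0\<close> by (intro divide_right_mono mult_left_mono power_mono) auto
    then show ?thesis
      using closest_point_gradient_step[OF X that(1) \<open>\<eta> > 0\<close>, where y = "y k" and g = "g k"] step by simp
  qed
  show ?thesis
    using v gG
  proof (induction n)
    case 0
    have "(norm (y 0 - v 0))\<^sup>2 \<le> D\<^sup>2" using diam y 0 by (intro power_mono) auto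
    then have "((norm (y 0 - v 0))\<^sup>2 - (norm (y 1 - v 0))\<^sup>2) / (2 * \<eta>)
        \<le> (D\<^sup>2 - (norm (y 1 - v 0))\<^sup>2) / (2 * \<eta>)"
      using \<open>\<eta> > 0\<close> by (intro divide_right_mono) auto
    then show ?case
      using one_step[of 0] 0 by simp
  next
    case (Suc n)
    have "(norm (y (Suc n) - v (Suc n)))\<^sup>2 - (norm (y (Suc n) - v n))\<^sup>2 \<le> 2 * D * norm (v (Suc n) - v n)"
      using power2_norm_diff_change_le[OF y _ _ diam] Suc.prems by simp
    then have "(D\<^sup>2 + 2 * D * (\<Sum>k<n. norm (v (Suc k) - v k)) - (norm (y (Suc n) - v n))\<^sup>2) / (2 * \<eta>)
        + ((norm (y (Suc n) - v (Suc n)))\<^sup>2 - (norm (y (Suc (Suc n)) - v (Suc n)))\<^sup>2) / (2 * \<eta>)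
      \<le> (D\<^sup>2 + 2 * D * (\<Sum>k<Suc n. norm (v (Suc k) - v k)) - (norm (y (Suc (Suc n)) - v (Suc n)))\<^sup>2) / (2 * \<eta>)"
      using \<open>\<eta> > 0\<close> unfolding add_divide_distrib [symmetric] sum.lessThan_Suc distrib_left
      by (intro divide_right_mono) linarith+
    moreover have "\<eta> * real (Suc n) * G\<^sup>2 / 2 + \<eta> * G\<^sup>2 / 2 = \<eta> * real (Suc (Suc n)) * G\<^sup>2 / 2"
      by (simp add: algebra_simps)
    ultimately show ?case
      using Suc.IH Suc.prems one_step[of "Suc n"] by simp
  qed
qed

lemma sum_inverse_consecutive_products:
  "(\<Sum>i=1..n. 1 / (real i * (real i + 1))) = real n / (real n + 1)"
proof (induction n)
  case (Suc n)
  have "real n / (real n + 1) + 1 / ((real n + 1) * (real n + 2)) = (real n + 1) / (real n + 2)"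
    by (simp add: field_simps add_nonneg_eq_0_iff)
  with Suc.IH show ?case by (simp add: add.commute)
qed simp

lemma hedge_learning_rate_tuned:
  fixes c T L :: real
  assumes "c > 0" "T > 0"
  shows "L / sqrt (2 / (T * c\<^sup>2)) + sqrt (2 / (T * c\<^sup>2)) * T * c\<^sup>2 / 2 = c * sqrt (2 * T) / 2 * (1 + L)"
proof -
  define \<alpha> \<beta> where "\<alpha> = sqrt (2 / (T * c\<^sup>2))" and "\<beta> = c * sqrt (2 * T) / 2"
  have "\<alpha> * sqrt (2 * T) = sqrt ((2 / c)\<^sup>2)"
    unfolding \<alpha>_def real_sqrt_mult [symmetric] using assms by (simp add: field_simps power2_eq_square)
  then have \<alpha>\<beta>: "\<alpha> * \<beta> = 1"
    using assms by (simp add: \<beta>_def mult.left_commute [of \<alpha> c])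
  then have "L / \<alpha> = L * \<beta>"
    by (simp add: divide_inverse inverse_unique)
  moreover have "\<alpha> * (T * c\<^sup>2 / 2) = \<beta>"
  proof -
    have "T * c\<^sup>2 / 2 = \<beta> * \<beta>"
      using assms by (simp add: \<beta>_def power2_eq_square)
    then show ?thesis
      using \<alpha>\<beta> by (simp only: mult.assoc [symmetric] mult_1)
  qed
  ultimately have "L / \<alpha> + \<alpha> * T * c\<^sup>2 / 2 = \<beta> * (1 + L)"
    by (simp add: algebra_simps)
  then show ?thesis by (simp add: \<alpha>_def \<beta>_def)
qed

lemma near_optimal_step_size:
  fixes a c \<eta> :: real
  assumes "a \<ge> 0" "c > 0" "\<eta> > 0" "\<eta> \<le> sqrt (a / c)" "sqrt (a / c) \<le> 2 * \<eta>"
  shows "a / \<eta> + c * \<eta> \<le> 3 * sqrt (a * c)"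
proof -
  define q where "q = sqrt (a / c)"
  have a: "a = c * q\<^sup>2" and cq: "sqrt (a * c) = c * q"
    using assms(1,2) by (simp_all add: q_def real_sqrt_mult real_sqrt_divide field_simps)
  have "(q - \<eta>) * (q - 2 * \<eta>) \<le> 0"
    using assms(4,5) by (intro mult_nonneg_nonpos) (auto simp: q_def)
  then have "q\<^sup>2 + 2 * \<eta>\<^sup>2 \<le> 3 * q * \<eta>"
    by (simp add: power2_eq_square algebra_simps)
  then have "q\<^sup>2 + \<eta>\<^sup>2 \<le> 3 * q * \<eta>"
    using zero_le_power2[of \<eta>] by linarith
  then have "c * (q\<^sup>2 + \<eta>\<^sup>2) / \<eta> \<le> c * (3 * q * \<eta>) / \<eta>"
    using assms(2,3) by (intro divide_right_mono mult_left_mono) auto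
  moreover have "a / \<eta> + c * \<eta> = c * (q\<^sup>2 + \<eta>\<^sup>2) / \<eta>"
    using assms(3) by (simp add: a field_simps power2_eq_square)
  ultimately show ?thesis
    using assms(3) by (simp add: cq)
qed

lemma two_power_floor_half_log_bracket:
  fixes r :: real
  assumes "r \<ge> 1"
  defines "m \<equiv> nat \<lfloor>1/2 * log 2 r\<rfloor>"
  shows "2 ^ m \<le> sqrt r" and "sqrt r \<le> 2 ^ Suc m"
proof -
  have "2 powr (1/2 * log 2 r) = (2 powr log 2 r) powr (1/2)"
    by (simp add: powr_powr mult.commute)
  then have sqrt_r: "sqrt r = 2 powr (1/2 * log 2 r)"
    using assms(1) by (simp add: powr_half_sqrt)
  have "0 \<le> log 2 r" using assms(1) by simp
  then have m: "real m = real_of_int \<lfloor>1/2 * log 2 r\<rfloor>"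
    by (simp add: m_def)
  have "2 ^ m = 2 powr real m" by (simp add: powr_realpow)
  also have "\<dots> \<le> sqrt r"
    unfolding sqrt_r m by (rule powr_mono) (rule of_int_floor_le, simp)
  finally show "2 ^ m \<le> sqrt r" .
  have "sqrt r \<le> 2 powr (real m + 1)"
    unfolding sqrt_r m by (intro powr_mono) (use real_of_int_floor_add_one_ge in auto)
  also have "\<dots> = 2 ^ Suc m" by (simp add: powr_add powr_realpow)
  finally show "sqrt r \<le> 2 ^ Suc m" .
qed

lemma geometric_grid_step_size:
  fixes G D P :: real and T k :: nat
  assumes "G > 0" "D > 0" "T \<ge> 1" "P \<ge> 0"
    and k: "k = nat \<lfloor>1/2 * log 2 (1 + 4 * P / (7 * D))\<rfloor> + 1"
  defines "\<eta> \<equiv> 2 ^ (k - 1) * D / G * sqrt (7 / (2 * real T))"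
  shows "(D\<^sup>2 + 2 * D * P) / (2 * \<eta>) + \<eta> * real T * G\<^sup>2 / 2
    \<le> 3 * G / 4 * sqrt (2 * real T * (7 * D\<^sup>2 + 4 * D * P))"
proof -
  define r where "r = 1 + 4 * P / (7 * D)"
  define b where "b = D / G * sqrt (7 / (2 * real T))"
  define a where "a = (7 * D\<^sup>2 + 4 * D * P) / 4"
  define c where "c = real T * G\<^sup>2 / 2"
  have "r \<ge> 1" "b > 0" "a \<ge> 0" "c > 0" "\<eta> > 0"
    using assms by (simp_all add: r_def b_def a_def c_def \<eta>_def)
  have \<eta>: "\<eta> = 2 ^ nat \<lfloor>1/2 * log 2 r\<rfloor> * b"
    by (simp add: \<eta>_def k r_def b_def)
  have "a / c = b\<^sup>2 * r"
    using assms by (simp add: a_def c_def b_def r_def power_divide field_simps power2_eq_square)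
  \<comment> \<open>sqrt (a / c) minimises a / eta + c * eta; the grid point eta_k lies within a factor 2 below it\<close>
  then have opt: "sqrt (a / c) = b * sqrt r"
    using \<open>b > 0\<close> by (simp add: real_sqrt_mult)
  have "\<eta> \<le> sqrt (a / c)" "sqrt (a / c) \<le> 2 * \<eta>"
    using two_power_floor_half_log_bracket[OF \<open>r \<ge> 1\<close>] \<open>b > 0\<close> unfolding opt \<eta>
    by (simp_all add: mult.commute[of b])
  then have "a / \<eta> + c * \<eta> \<le> 3 * sqrt (a * c)"
    using near_optimal_step_size \<open>a \<ge> 0\<close> \<open>c > 0\<close> \<open>\<eta> > 0\<close> by blast
  moreover have "(D\<^sup>2 + 2 * D * P) / (2 * \<eta>) \<le> a / \<eta>"
    using assms \<open>\<eta> > 0\<close> by (simp add: a_def divide_right_mono field_simps)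
  moreover have "3 * sqrt (a * c) = 3 * G / 4 * sqrt (2 * real T * (7 * D\<^sup>2 + 4 * D * P))"
  proof -
    have "a * c = (G / 4)\<^sup>2 * (2 * real T * (7 * D\<^sup>2 + 4 * D * P))"
      by (simp add: a_def c_def power2_eq_square field_simps)
    then show ?thesis
      using \<open>G > 0\<close> by (simp add: real_sqrt_mult)
  qed
  moreover have "\<eta> * real T * G\<^sup>2 / 2 = c * \<eta>"
    by (simp add: c_def)
  ultimately show ?thesis
    by linarith
qed

lemma geometric_grid_index_le:
  fixes D P :: real and T :: nat
  assumes "D > 0" "0 \<le> P" "P \<le> real T * D"
  shows "nat \<lfloor>1/2 * log 2 (1 + 4 * P / (7 * D))\<rfloor> \<le> nat \<lceil>1/2 * log 2 (1 + 4 * real T / 7)\<rceil>"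
proof -
  have "1 + 4 * P / (7 * D) \<le> 1 + 4 * real T / 7"
    using assms by (simp add: field_simps)
  moreover have "0 < 1 + 4 * P / (7 * D)"
    using assms by (simp add: add_pos_nonneg)
  ultimately have "1/2 * log 2 (1 + 4 * P / (7 * D)) \<le> 1/2 * log 2 (1 + 4 * real T / 7)"
    by simp
  then have "\<lfloor>1/2 * log 2 (1 + 4 * P / (7 * D))\<rfloor> \<le> \<lceil>1/2 * log 2 (1 + 4 * real T / 7)\<rceil>"
    using floor_le_ceiling floor_mono order_trans by blast
  then show ?thesis by (rule nat_mono)
qed

lemma path_length_le:
  assumes "\<forall>t\<in>{1..T}. u t \<in> X" "\<forall>x\<in>X. \<forall>x'\<in>X. norm (x - x') \<le> D" "0 \<le> D"
  shows "(\<Sum>t=2..T. norm (u t - u (t - 1))) \<le> real T * D"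
proof -
  have "norm (u t - u (t - 1)) \<le> D" if "t \<in> {2..T}" for t
  proof -
    have "t \<in> {1..T}" "t - 1 \<in> {1..T}" using that by auto
    then have "u t \<in> X" "u (t - 1) \<in> X" using assms(1) by blast+
    then show ?thesis using assms(2) by blast
  qed
  then have "(\<Sum>t=2..T. norm (u t - u (t - 1))) \<le> real (card {2..T}) * D"
    by (rule sum_bounded_above)
  also have "\<dots> \<le> real T * D"
    using assms(3) by (intro mult_right_mono) auto
  finally show ?thesis .
qed

locale improved_ader =
  fixes gr :: "nat \<Rightarrow> 'a::euclidean_space \<Rightarrow> 'a" and X :: "'a set" and alpha :: real
    and eta :: "nat \<Rightarrow> real" and N :: nat and x1 :: "nat \<Rightarrow> 'a"
  assumes X: "X \<noteq> {}" "closed X" "convex X"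
    and N: "N \<ge> 1"
    and x1: "\<forall>i\<in>{1..N}. x1 i \<in> X"
begin

text \<open>Quantities with time index t belong to round t + 1, so the gradient at t is that of f (t + 1).\<close>

definition expert :: "nat \<Rightarrow> nat \<Rightarrow> 'a" where
  "expert t = fst (ader_state gr X alpha eta N x1 t)"

definition weight :: "nat \<Rightarrow> nat \<Rightarrow> real" where
  "weight t = snd (ader_state gr X alpha eta N x1 t)"

definition play :: "nat \<Rightarrow> 'a" where
  "play t = (\<Sum>i=1..N. weight t i *\<^sub>R expert t i)"

definition gradient :: "nat \<Rightarrow> 'a" where
  "gradient t = gr (Suc t) (play t)"

definition surrogate_loss :: "nat \<Rightarrow> nat \<Rightarrow> real" where
  "surrogate_loss t i = gradient t \<bullet> (expert t i - play t)"

definition normaliser :: "nat \<Rightarrow> real" where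
  "normaliser t = (\<Sum>j=1..N. weight t j * exp (- alpha * surrogate_loss t j))"

lemma ader_state_eq: "ader_state gr X alpha eta N x1 t = (expert t, weight t)"
  by (simp add: expert_def weight_def)

lemma expert_0: "expert 0 = x1"
  and weight_0: "weight 0 i = (1 + 1 / real N) / (real i * (real i + 1))"
  by (simp_all add: expert_def weight_def)

lemma ader_state_Suc:
  "ader_state gr X alpha eta N x1 (Suc t) =
     ((\<lambda>i. closest_point X (expert t i - eta i *\<^sub>R gradient t)),
      (\<lambda>i. weight t i * exp (- alpha * surrogate_loss t i) / normaliser t))"
  using ader_state_eq[of t]
  by (simp add: Let_def play_def gradient_def surrogate_loss_def normaliser_def)

lemma expert_Suc: "expert (Suc t) i = closest_point X (expert t i - eta i *\<^sub>R gradient t)"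
  by (simp only: expert_def [of "Suc t"] ader_state_Suc fst_conv)

lemma weight_Suc: "weight (Suc t) i = weight t i * exp (- alpha * surrogate_loss t i) / normaliser t"
  by (simp only: weight_def [of "Suc t"] ader_state_Suc snd_conv)

lemma ader_play_Suc: "ader_play gr X alpha eta N x1 (Suc t) = play t"
  by (simp add: ader_play_def ader_state_eq play_def)

lemma expert_in_X: "i \<in> {1..N} \<Longrightarrow> expert t i \<in> X"
  using x1 closest_point_in_set[OF X(2,1)] by (cases t) (auto simp: expert_0 expert_Suc)

lemma weight_pos: "i \<in> {1..N} \<Longrightarrow> 0 < weight t i"
proof (induction t arbitrary: i)
  case 0
  then show ?case by (auto simp: weight_0 intro!: divide_pos_pos add_pos_nonneg)
next
  case (Suc t)
  have "0 < normaliser t"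
    unfolding normaliser_def using Suc.IH N by (intro sum_pos) auto
  with Suc show ?case by (simp add: weight_Suc)
qed

lemma normaliser_pos: "0 < normaliser t"
  unfolding normaliser_def using weight_pos N by (intro sum_pos) auto

lemma sum_weight: "sum (weight t) {1..N} = 1"
proof (cases t)
  case 0
  have "sum (weight 0) {1..N} = (1 + 1 / real N) * (\<Sum>i=1..N. 1 / (real i * (real i + 1)))"
    by (simp add: weight_0 sum_distrib_left)
  also have "\<dots> = (1 + 1 / real N) * (real N / (real N + 1))"
    by (simp only: sum_inverse_consecutive_products)
  also have "\<dots> = (real N + 1) / real N * (real N / (real N + 1))"
    using N by (simp add: field_simps)
  also have "\<dots> = 1"
    using N by simp
  finally show ?thesis by (simp add: 0)
next
  case (Suc t)
  have "sum (weight (Suc t)) {1..N} = (\<Sum>i=1..N. weight t i * exp (- alpha * surrogate_loss t i) / normaliser t)"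
    by (rule sum.cong) (simp_all add: weight_Suc)
  also have "\<dots> = normaliser t / normaliser t"
    by (simp only: sum_divide_distrib [symmetric] normaliser_def)
  finally show ?thesis
    using normaliser_pos[of t] by (simp add: Suc)
qed

lemma play_in_X: "play t \<in> X"
  unfolding play_def using weight_pos sum_weight expert_in_X X(3)
  by (intro convex_sum) (auto intro: less_imp_le)

lemma weighted_surrogate_loss_eq_0: "(\<Sum>i=1..N. weight t i * surrogate_loss t i) = 0"
proof -
  have "(\<Sum>i=1..N. weight t i * surrogate_loss t i)
      = gradient t \<bullet> play t - sum (weight t) {1..N} * (gradient t \<bullet> play t)"
    by (simp add: surrogate_loss_def play_def inner_diff_right inner_sum_right right_diff_distrib
        sum_subtractf sum_distrib_right)
  then show ?thesis using sum_weight[of t] by simp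
qed

lemma weight_closed_form:
  "weight n i = weight 0 i * exp (- alpha * (\<Sum>t<n. surrogate_loss t i)) / (\<Prod>t<n. normaliser t)"
proof (induction n)
  case (Suc n)
  have "exp (- alpha * (\<Sum>t<Suc n. surrogate_loss t i))
      = exp (- alpha * (\<Sum>t<n. surrogate_loss t i)) * exp (- alpha * surrogate_loss n i)"
    by (simp only: sum.lessThan_Suc distrib_left exp_add)
  with Suc.IH show ?case by (simp add: weight_Suc)
qed simp

lemma abs_surrogate_loss_le:
  assumes "norm (gradient t) \<le> G" "i \<in> {1..N}" and diam: "\<forall>x\<in>X. \<forall>x'\<in>X. norm (x - x') \<le> D"
  shows "\<bar>surrogate_loss t i\<bar> \<le> G * D"
proof -
  have "\<bar>surrogate_loss t i\<bar> \<le> norm (gradient t) * norm (expert t i - play t)"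
    unfolding surrogate_loss_def by (rule Cauchy_Schwarz_ineq2)
  also have "\<dots> \<le> G * D"
    using assms expert_in_X play_in_X by (intro mult_mono) (auto intro: order_trans[OF norm_ge_zero])
  finally show ?thesis .
qed


lemma hedge_regret:
  assumes "0 < alpha" "0 < c" "i \<in> {1..N}"
    and loss: "\<And>t j. t < T \<Longrightarrow> j \<in> {1..N} \<Longrightarrow> \<bar>surrogate_loss t j\<bar> \<le> c"
  shows "- (\<Sum>t<T. surrogate_loss t i) \<le> - ln (weight 0 i) / alpha + alpha * real T * c\<^sup>2 / 2"
proof -
  define L where "L = (\<Sum>t<T. surrogate_loss t i)"
  have "normaliser t \<le> exp (alpha\<^sup>2 * c\<^sup>2 / 2)" if "t < T" for t
    using weighted_exp_le_exp_half_square[of "{1..N}" "weight t" "surrogate_loss t" c "- alpha"]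
      weight_pos sum_weight weighted_surrogate_loss_eq_0 loss[OF that] \<open>0 < c\<close>
    by (force simp: normaliser_def less_imp_le)
  then have "(\<Prod>t<T. normaliser t) \<le> (\<Prod>t<T. exp (alpha\<^sup>2 * c\<^sup>2 / 2))"
    by (intro prod_mono) (auto intro: less_imp_le normaliser_pos)
  also have "\<dots> = exp (alpha\<^sup>2 * real T * c\<^sup>2 / 2)"
    by (simp add: exp_of_nat_mult [symmetric] mult_ac)
  finally have prod_le: "(\<Prod>t<T. normaliser t) \<le> exp (alpha\<^sup>2 * real T * c\<^sup>2 / 2)" .
  have "weight T i \<le> sum (weight T) {1..N}"
    using \<open>i \<in> {1..N}\<close> weight_pos by (intro member_le_sum) (auto intro: less_imp_le)
  then have "weight T i \<le> 1" using sum_weight[of T] by simp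
  then have "weight 0 i * exp (- alpha * L) \<le> (\<Prod>t<T. normaliser t)"
    using weight_closed_form[of T i] normaliser_pos by (simp add: L_def divide_le_eq prod_pos)
  with prod_le have "ln (weight 0 i * exp (- alpha * L)) \<le> ln (exp (alpha\<^sup>2 * real T * c\<^sup>2 / 2))"
    using weight_pos[OF \<open>i \<in> {1..N}\<close>] by (intro ln_mono) auto
  then have "alpha * (- L) \<le> - ln (weight 0 i) + alpha\<^sup>2 * real T * c\<^sup>2 / 2"
    by (simp only: ln_mult_pos [OF weight_pos [OF \<open>i \<in> {1..N}\<close>] exp_gt_zero] ln_exp)
  then have "- L \<le> (- ln (weight 0 i) + alpha\<^sup>2 * real T * c\<^sup>2 / 2) / alpha"
    using \<open>0 < alpha\<close> by (simp add: le_divide_eq mult.commute)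
  also have "\<dots> = - ln (weight 0 i) / alpha + alpha * real T * c\<^sup>2 / 2"
    using \<open>0 < alpha\<close> by (simp add: field_simps power2_eq_square)
  finally show ?thesis by (simp add: L_def)
qed

lemma minus_ln_weight_0_le:
  assumes "i \<ge> 1"
  shows "- ln (weight 0 i) \<le> 2 * ln (real i + 1)"
proof -
  have "1 / (real i + 1)\<^sup>2 \<le> 1 / (real i * (real i + 1))"
    using assms by (intro divide_left_mono) (auto simp: power2_eq_square)
  also have "\<dots> \<le> weight 0 i"
    using assms by (simp add: weight_0 divide_right_mono)
  finally have "ln (1 / (real i + 1)\<^sup>2) \<le> ln (weight 0 i)"
    by (rule ln_mono) simp
  then show ?thesis
    by (simp add: ln_div ln_realpow)
qed

lemma tuned_hedge_regret_bound_le: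
  assumes "0 < c" "0 < T" "i \<ge> 1" "alpha = sqrt (2 / (real T * c\<^sup>2))"
  shows "- ln (weight 0 i) / alpha + alpha * real T * c\<^sup>2 / 2
    \<le> c * sqrt (2 * real T) / 2 * (1 + 2 * ln (real i + 1))"
proof -
  have "- ln (weight 0 i) / alpha + alpha * real T * c\<^sup>2 / 2
      = c * sqrt (2 * real T) / 2 * (1 + - ln (weight 0 i))"
    unfolding assms(4) using assms(1,2) by (intro hedge_learning_rate_tuned) auto
  also have "\<dots> \<le> c * sqrt (2 * real T) / 2 * (1 + 2 * ln (real i + 1))"
    using minus_ln_weight_0_le[OF assms(3)] assms(1) by (intro mult_left_mono) auto
  finally show ?thesis .
qed

lemma expert_dynamic_regret:
  assumes "0 < eta i" "i \<in> {1..N}" "0 < T"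
    and gradient: "\<And>t. t < T \<Longrightarrow> norm (gradient t) \<le> G"
    and v: "\<And>t. t < T \<Longrightarrow> v t \<in> X"
    and diam: "\<forall>x\<in>X. \<forall>x'\<in>X. norm (x - x') \<le> D"
  shows "(\<Sum>t<T. gradient t \<bullet> (expert t i - v t))
    \<le> (D\<^sup>2 + 2 * D * (\<Sum>t<T - 1. norm (v (Suc t) - v t))) / (2 * eta i) + eta i * real T * G\<^sup>2 / 2"
proof -
  obtain n where T: "T = Suc n"
    using \<open>0 < T\<close> gr0_implies_Suc by blast
  have "(\<Sum>t<T. gradient t \<bullet> (expert t i - v t))
    \<le> (D\<^sup>2 + 2 * D * (\<Sum>t<n. norm (v (Suc t) - v t)) - (norm (expert (Suc n) i - v n))\<^sup>2) / (2 * eta i)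
       + eta i * real T * G\<^sup>2 / 2"
    unfolding T using assms expert_in_X T
    by (intro projected_gradient_regret_telescoping[OF X \<open>0 < eta i\<close>]) (auto simp: expert_Suc)
  also have "\<dots> \<le> (D\<^sup>2 + 2 * D * (\<Sum>t<n. norm (v (Suc t) - v t))) / (2 * eta i) + eta i * real T * G\<^sup>2 / 2"
    using \<open>0 < eta i\<close> by (intro add_right_mono divide_right_mono) auto
  finally show ?thesis by (simp add: T)
qed

lemma linearized_regret_eq:
  "(\<Sum>t<T. gradient t \<bullet> (play t - v t))
     = - (\<Sum>t<T. surrogate_loss t i) + (\<Sum>t<T. gradient t \<bullet> (expert t i - v t))"
  by (simp add: surrogate_loss_def inner_diff_right sum_subtractf)

lemma regret_le_linearized_regret:
  assumes cvx: "\<forall>t\<in>{1..T}. convex_on X (f t)"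
    and grad: "\<forall>t\<in>{1..T}. \<forall>x\<in>X. (f t has_derivative (\<lambda>h. gr t x \<bullet> h)) (at x within X)"
    and u: "\<forall>t\<in>{1..T}. u t \<in> X"
  shows "(\<Sum>t=1..T. f t (ader_play gr X alpha eta N x1 t)) - (\<Sum>t=1..T. f t (u t))
    \<le> (\<Sum>t<T. gradient t \<bullet> (play t - u (Suc t)))"
proof -
  have "(\<Sum>t=1..T. f t (ader_play gr X alpha eta N x1 t)) - (\<Sum>t=1..T. f t (u t))
      = (\<Sum>t<T. f (Suc t) (play t) - f (Suc t) (u (Suc t)))"
    by (simp add: sum.atLeast1_atMost_eq ader_play_Suc sum_subtractf)
  also have "\<dots> \<le> (\<Sum>t<T. gradient t \<bullet> (play t - u (Suc t)))"
  proof (rule sum_mono)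
    fix t assume "t \<in> {..<T}"
    then have t: "Suc t \<in> {1..T}" by simp
    have "f (Suc t) (play t) + gradient t \<bullet> (u (Suc t) - play t) \<le> f (Suc t) (u (Suc t))"
      unfolding gradient_def using cvx grad u t play_in_X
      by (intro convex_on_gradient_inequality) auto
    then show "f (Suc t) (play t) - f (Suc t) (u (Suc t)) \<le> gradient t \<bullet> (play t - u (Suc t))"
      by (simp add: inner_diff_right)
  qed
  finally show ?thesis .
qed

lemma linearized_regret_le:
  assumes "0 < alpha" "0 < G" "0 < D" "0 < T" "i \<in> {1..N}" "0 < eta i"
    and A2: "\<forall>t\<in>{1..T}. \<forall>x\<in>X. norm (gr t x) \<le> G"
    and diam: "\<forall>x\<in>X. \<forall>x'\<in>X. norm (x - x') \<le> D"
    and v: "\<And>t. t < T \<Longrightarrow> v t \<in> X"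
  shows "(\<Sum>t<T. gradient t \<bullet> (play t - v t))
    \<le> (- ln (weight 0 i) / alpha + alpha * real T * (G * D)\<^sup>2 / 2)
       + ((D\<^sup>2 + 2 * D * (\<Sum>t<T - 1. norm (v (Suc t) - v t))) / (2 * eta i) + eta i * real T * G\<^sup>2 / 2)"
proof -
  have gradient: "norm (gradient t) \<le> G" if "t < T" for t
    using A2 play_in_X that by (simp add: gradient_def)
  have "- (\<Sum>t<T. surrogate_loss t i) \<le> - ln (weight 0 i) / alpha + alpha * real T * (G * D)\<^sup>2 / 2"
    using assms abs_surrogate_loss_le[OF gradient _ diam] by (intro hedge_regret) auto
  moreover have "(\<Sum>t<T. gradient t \<bullet> (expert t i - v t))
    \<le> (D\<^sup>2 + 2 * D * (\<Sum>t<T - 1. norm (v (Suc t) - v t))) / (2 * eta i) + eta i * real T * G\<^sup>2 / 2"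
    using assms gradient by (intro expert_dynamic_regret) auto
  ultimately show ?thesis
    unfolding linearized_regret_eq[where T = T and v = v and i = i] by linarith
qed

end

theorem theorem4:
  fixes X :: "'a::euclidean_space set"
    and f :: "nat \<Rightarrow> 'a \<Rightarrow> real"
    and gr :: "nat \<Rightarrow> 'a \<Rightarrow> 'a"
    and G D :: real and T :: nat
    and x1 :: "nat \<Rightarrow> 'a" and u :: "nat \<Rightarrow> 'a"
  assumes X: "X \<noteq> {}" "closed X" "convex X"
    and T: "T \<ge> 1"
    and GD: "G > 0" "D > 0"
    and cvx: "\<forall>t\<in>{1..T}. convex_on X (f t)"
    and grad: "\<forall>t\<in>{1..T}. \<forall>x\<in>X. (f t has_derivative (\<lambda>h. gr t x \<bullet> h)) (at x within X)"
    and A2: "\<forall>t\<in>{1..T}. \<forall>x\<in>X. norm (gr t x) \<le> G"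
    and A3: "0 \<in> X" "\<forall>x\<in>X. \<forall>x'\<in>X. norm (x - x') \<le> D"
    and N_def: "N = nat \<lceil>1/2 * log 2 (1 + 4 * real T / 7)\<rceil> + 1"
    and eta_def: "eta = (\<lambda>i::nat. 2 ^ (i - 1) * D / G * sqrt (7 / (2 * real T)))"
    and alpha_def: "alpha = sqrt (2 / (real T * G\<^sup>2 * D\<^sup>2))"
    and x1: "\<forall>i\<in>{1..N}. x1 i \<in> X"
    and u: "\<forall>t\<in>{1..T}. u t \<in> X"
    and P_def: "P = (\<Sum>t=2..T. norm (u t - u (t - 1)))"
    and k_def: "k = nat \<lfloor>1/2 * log 2 (1 + 4 * P / (7 * D))\<rfloor> + 1"
  shows "(\<Sum>t=1..T. f t (ader_play gr X alpha eta N x1 t)) - (\<Sum>t=1..T. f t (u t))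
     \<le> 3 * G / 4 * sqrt (2 * real T * (7 * D\<^sup>2 + 4 * D * P))
       + G * D * sqrt (2 * real T) / 2 * (1 + 2 * ln (real k + 1))"
proof -
  interpret improved_ader gr X alpha eta N x1
    using X x1 by unfold_locales (simp_all add: N_def)
  have P: "0 \<le> P" "P \<le> real T * D"
    using path_length_le[OF u A3(2)] GD unfolding P_def by (auto intro: sum_nonneg)
  have k: "k \<in> {1..N}"
    using geometric_grid_index_le[OF GD(2) P] unfolding k_def N_def by simp
  obtain n where n: "T = Suc n" using T by (cases T) auto
  have path: "(\<Sum>t<T - 1. norm (u (Suc (Suc t)) - u (Suc t))) = P"
    unfolding P_def n numeral_2_eq_2 sum.shift_bounds_cl_Suc_ivl sum.atLeast1_atMost_eq by simp
  have "0 < alpha" "0 < eta k"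
    using GD T by (simp_all add: alpha_def eta_def)
  have hedge: "- ln (weight 0 k) / alpha + alpha * real T * (G * D)\<^sup>2 / 2
      \<le> G * D * sqrt (2 * real T) / 2 * (1 + 2 * ln (real k + 1))"
    using GD T k by (intro tuned_hedge_regret_bound_le) (auto simp: alpha_def power_mult_distrib mult.assoc)
  have experts: "(D\<^sup>2 + 2 * D * P) / (2 * eta k) + eta k * real T * G\<^sup>2 / 2
      \<le> 3 * G / 4 * sqrt (2 * real T * (7 * D\<^sup>2 + 4 * D * P))"
    using geometric_grid_step_size[OF GD T P(1) k_def] by (simp only: eta_def)
  have "(\<Sum>t=1..T. f t (ader_play gr X alpha eta N x1 t)) - (\<Sum>t=1..T. f t (u t))
      \<le> (\<Sum>t<T. gradient t \<bullet> (play t - u (Suc t)))"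
    by (rule regret_le_linearized_regret[OF cvx grad u])
  also have "\<dots> \<le> (- ln (weight 0 k) / alpha + alpha * real T * (G * D)\<^sup>2 / 2)
      + ((D\<^sup>2 + 2 * D * P) / (2 * eta k) + eta k * real T * G\<^sup>2 / 2)"
    using linearized_regret_le[OF \<open>0 < alpha\<close> GD _ k \<open>0 < eta k\<close> A2 A3(2), of "\<lambda>t. u (Suc t)"] u T
    unfolding path by auto
  finally show ?thesis
    using hedge experts by linarith
qed

end
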